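(* Let $\mathbb{F}$ be a field, $n,m\ge 1$, and $B'_1,\dots,B'_n\in\mathrm{M}(n\times m,\mathbb{F})$. For $v\in\mathbb{F}^m$ let its right degree be the rank of the $n\times n$ matrix $[B'_1v,\dots,B'_nv]$. Let $\mathcal{A}\le\Lambda(n+m,\mathbb{F})$ be spanned by: $A_i=\begin{bmatrix}0&B'_i\\-B'^t_i&0\end{bmatrix}$ for $i\in[n]$; $C_{i,j}=e_ie_j^t-e_je_i^t$ for $1\le i<j\le n$; and $D_{k,\ell}=e_{n+k}e_{n+\ell}^t-e_{n+\ell}e_{n+k}^t$ for $1\le k<\ell\le m$ (here $e_1,\dots,e_{n+m}$ is the standard basis of $\mathbb{F}^{n+m}$). Then there exists a nonzero $v\in\mathbb{F}^m$ of right degree $<n$ if and only if $\mathcal{A}$ has an isotropic space of dimension $2$.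
   Context: $\Lambda(N,\mathbb{F})$ is the space of $N\times N$ alternating matrices. A subspace $U$ is an isotropic space of $\mathcal{A}$ if $u^tAu'=0$ for all $u,u'\in U$, $A\in\mathcal{A}$. *)

theory Defs
  imports "Jordan_Normal_Form.DL_Rank"
begin

(* Indices are 0-based: the paper's B'_1..B'_n are Bs 0 .. Bs (n-1),
   the standard basis e_1..e_{n+m} is e_0..e_{n+m-1}. *)

definition deg_matrix :: "nat \<Rightarrow> (nat \<Rightarrow> 'a::field mat) \<Rightarrow> 'a vec \<Rightarrow> 'a mat" where
  "deg_matrix n Bs v = mat_of_cols n (map (\<lambda>i. Bs i *\<^sub>v v) [0..<n])"

definition right_degree :: "nat \<Rightarrow> (nat \<Rightarrow> 'a::field mat) \<Rightarrow> 'a vec \<Rightarrow> nat" where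
  "right_degree n Bs v = vec_space.rank n (deg_matrix n Bs v)"

definition alt_unit :: "nat \<Rightarrow> nat \<Rightarrow> nat \<Rightarrow> 'a::field mat" where
  "alt_unit N i j = mat N N (\<lambda>(r,s). (if r = i \<and> s = j then 1 else 0) - (if r = j \<and> s = i then 1 else 0))"

definition block_alt :: "nat \<Rightarrow> nat \<Rightarrow> 'a::field mat \<Rightarrow> 'a mat" where
  "block_alt n m B = four_block_mat (0\<^sub>m n n) B (- transpose_mat B) (0\<^sub>m m m)"

definition gens :: "nat \<Rightarrow> nat \<Rightarrow> (nat \<Rightarrow> 'a::field mat) \<Rightarrow> 'a mat set" where
  "gens n m Bs =
     {block_alt n m (Bs i) | i. i < n}
   \<union> {alt_unit (n+m) i j | i j. i < j \<and> j < n}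
   \<union> {alt_unit (n+m) (n+k) (n+l) | k l. k < l \<and> l < m}"

definition mat_span :: "nat \<Rightarrow> 'a::field mat set \<Rightarrow> 'a mat set" where
  "mat_span N G = {mat N N (\<lambda>(r,s). \<Sum>g\<in>G. c g * g $$ (r,s)) | c. True}"

definition Aspace :: "nat \<Rightarrow> nat \<Rightarrow> (nat \<Rightarrow> 'a::field mat) \<Rightarrow> 'a mat set" where
  "Aspace n m Bs = mat_span (n+m) (gens n m Bs)"

definition isotropic :: "nat \<Rightarrow> 'a::field mat set \<Rightarrow> 'a vec set \<Rightarrow> bool" where
  "isotropic N \<A> U \<longleftrightarrow> subspace class_ring U (module_vec TYPE('a) N) \<and>
     (\<forall>u\<in>U. \<forall>u'\<in>U. \<forall>A\<in>\<A>. u \<bullet> (A *\<^sub>v u') = 0)"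

definition subspace_dim :: "nat \<Rightarrow> 'a::field vec set \<Rightarrow> nat" where
  "subspace_dim N U = vectorspace.dim class_ring ((module_vec TYPE('a) N)\<lparr>carrier := U\<rparr>)"

end

theory Submission
  imports Defs
begin

(*
  On vectors (x, y), (x', y') of F^n x F^m the generator A_i evaluates to
  x^t B'_i y' - x'^t B'_i y, and C_{i,j}, D_{k,l} evaluate to the 2x2 minors of (x, x') and of
  (y, y'). If w^t [B'_1 v, ..., B'_n v] = 0 for nonzero w and v, all of these vanish on the plane
  spanned by (w, 0) and (0, v). Conversely, in an isotropic plane those minors vanish, so the
  plane contains nonzero vectors (0, v) and (w, 0); the A_i then force w^t B'_i v = 0 for all i,
  i.e. w is a nonzero vector in the left kernel of [B'_1 v, ..., B'_n v].
*)

lemma alt_unit_bilinear: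
  fixes u u' :: "'a::field vec"
  assumes "i < N" "j < N" "i \<noteq> j" "u \<in> carrier_vec N" "u' \<in> carrier_vec N"
  shows "u \<bullet> (alt_unit N i j *\<^sub>v u') = u$i * u'$j - u$j * u'$i"
proof -
  have "alt_unit N i j *\<^sub>v u' = u'$j \<cdot>\<^sub>v unit_vec N i - u'$i \<cdot>\<^sub>v unit_vec N j"
  proof (rule eq_vecI)
    fix r assume "r < dim_vec (u'$j \<cdot>\<^sub>v unit_vec N i - u'$i \<cdot>\<^sub>v unit_vec N j)"
    then have r: "r < N" by simp
    have delta: "(if P then 1 else 0) * x = (if P then x else 0)" for P and x :: 'a
      by simp
    show "(alt_unit N i j *\<^sub>v u') $ r = (u'$j \<cdot>\<^sub>v unit_vec N i - u'$i \<cdot>\<^sub>v unit_vec N j) $ r"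
      using r assms by (cases "r = i"; cases "r = j")
        (auto simp: alt_unit_def scalar_prod_def lessThan_atLeast0 left_diff_distrib
          sum_subtractf sum_negf delta)
  qed (simp add: alt_unit_def)
  then show ?thesis using assms by (simp add: scalar_prod_minus_distrib)
qed

lemma block_alt_bilinear:
  fixes B :: "'a::field mat"
  assumes B: "B \<in> carrier_mat n m" and x: "x \<in> carrier_vec n" "x' \<in> carrier_vec n"
    and y: "y \<in> carrier_vec m" "y' \<in> carrier_vec m"
  shows "(x @\<^sub>v y) \<bullet> (block_alt n m B *\<^sub>v (x' @\<^sub>v y')) = x \<bullet> (B *\<^sub>v y') - x' \<bullet> (B *\<^sub>v y)"
proof -
  have "block_alt n m B *\<^sub>v (x' @\<^sub>v y') = (0\<^sub>m n n *\<^sub>v x' + B *\<^sub>v y') @\<^sub>v (- transpose_mat B *\<^sub>v x' + 0\<^sub>m m m *\<^sub>v y')"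
    unfolding block_alt_def by (rule four_block_mat_mult_vec) (use assms in auto)
  also have "\<dots> = (B *\<^sub>v y') @\<^sub>v (- (transpose_mat B *\<^sub>v x'))"
    using assms by auto
  finally have "(x @\<^sub>v y) \<bullet> (block_alt n m B *\<^sub>v (x' @\<^sub>v y')) = x \<bullet> (B *\<^sub>v y') + y \<bullet> (- (transpose_mat B *\<^sub>v x'))"
    using assms by (simp add: scalar_prod_append)
  also have "y \<bullet> (- (transpose_mat B *\<^sub>v x')) = - ((transpose_mat B *\<^sub>v x') \<bullet> y)"
    using assms by (simp add: comm_scalar_prod[of y m])
  also have "(transpose_mat B *\<^sub>v x') \<bullet> y = x' \<bullet> (B *\<^sub>v y)"
    using assms by (simp add: transpose_vec_mult_scalar)
  finally show ?thesis by simp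
qed

lemma scalar_prod_mult_mat_vec_double_sum:
  assumes "A \<in> carrier_mat N N" "u \<in> carrier_vec N" "u' \<in> carrier_vec N"
  shows "u \<bullet> (A *\<^sub>v u') = (\<Sum>r<N. \<Sum>s<N. u$r * A$$(r,s) * u'$s)"
  using assms by (simp add: scalar_prod_def lessThan_atLeast0 sum_distrib_left mult.assoc)

lemma bilinear_mat_span:
  assumes G: "G \<subseteq> carrier_mat N N" and M: "M \<in> mat_span N G"
    and u: "u \<in> carrier_vec N" "u' \<in> carrier_vec N"
  obtains c where "u \<bullet> (M *\<^sub>v u') = (\<Sum>g\<in>G. c g * (u \<bullet> (g *\<^sub>v u')))"
proof -
  from M obtain c where c: "M = mat N N (\<lambda>(r,s). \<Sum>g\<in>G. c g * g $$ (r,s))"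
    unfolding mat_span_def by auto
  have "u \<bullet> (M *\<^sub>v u') = (\<Sum>r<N. \<Sum>s<N. u$r * M$$(r,s) * u'$s)"
    using u c by (intro scalar_prod_mult_mat_vec_double_sum) auto
  also have "\<dots> = (\<Sum>r<N. \<Sum>s<N. \<Sum>g\<in>G. c g * (u$r * g$$(r,s) * u'$s))"
    by (intro sum.cong refl) (simp add: c sum_distrib_left sum_distrib_right mult_ac)
  also have "\<dots> = (\<Sum>g\<in>G. c g * (\<Sum>r<N. \<Sum>s<N. u$r * g$$(r,s) * u'$s))"
    by (simp add: sum_distrib_left sum.swap[of _ G])
  also have "\<dots> = (\<Sum>g\<in>G. c g * (u \<bullet> (g *\<^sub>v u')))"
    using G u by (intro sum.cong refl) (auto simp: scalar_prod_mult_mat_vec_double_sum)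
  finally show ?thesis using that by blast
qed

lemma submodule_subset_carrier_vec:
  "submodule R U (module_vec TYPE('a::semiring_1) N) \<Longrightarrow> U \<subseteq> carrier_vec N"
  by (simp add: submodule_def module_vec_simps)

lemma mat_span_generator:
  assumes "finite G" "g \<in> G" "g \<in> carrier_mat N N"
  shows "g \<in> mat_span N G"
proof -
  have delta: "(if g' = g then 1 else 0) * x = (if g' = g then x else 0)" for g' and x :: 'a
    by simp
  have "mat N N (\<lambda>(r,s). \<Sum>g'\<in>G. (if g' = g then 1 else 0) * g' $$ (r,s)) = g"
    using assms by (intro eq_matI) (auto simp: delta)
  then show ?thesis unfolding mat_span_def
    by (intro CollectI exI[where x="\<lambda>g'. if g' = g then 1 else 0"]) simp
qed

lemma isotropic_mat_span_iff:
  fixes G :: "'a::field mat set"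
  assumes "finite G" "G \<subseteq> carrier_mat N N"
  shows "isotropic N (mat_span N G) U \<longleftrightarrow>
    subspace class_ring U (module_vec TYPE('a) N) \<and> (\<forall>u\<in>U. \<forall>u'\<in>U. \<forall>g\<in>G. u \<bullet> (g *\<^sub>v u') = 0)"
proof -
  have "u \<bullet> (M *\<^sub>v u') = 0"
    if "U \<subseteq> carrier_vec N" "\<forall>u\<in>U. \<forall>u'\<in>U. \<forall>g\<in>G. u \<bullet> (g *\<^sub>v u') = 0"
      "u \<in> U" "u' \<in> U" "M \<in> mat_span N G" for u u' M
    using bilinear_mat_span[of G N M u u'] assms that by auto
  moreover have "subspace class_ring U (module_vec TYPE('a) N) \<Longrightarrow> U \<subseteq> carrier_vec N"
    by (auto simp: subspace_def dest: submodule_subset_carrier_vec)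
  ultimately show ?thesis
    unfolding isotropic_def using assms mat_span_generator[of G] by blast
qed

lemma gens_carrier:
  assumes "\<And>i. i < n \<Longrightarrow> Bs i \<in> carrier_mat n m"
  shows "gens n m Bs \<subseteq> carrier_mat (n+m) (n+m)"
  using assms unfolding gens_def block_alt_def alt_unit_def by auto

lemma finite_gens: "finite (gens n m Bs)"
proof -
  have "gens n m Bs \<subseteq> (\<lambda>i. block_alt n m (Bs i)) ` {..<n}
      \<union> (\<lambda>(i,j). alt_unit (n+m) i j) ` ({..<n+m} \<times> {..<n+m})"
    unfolding gens_def by force
  then show ?thesis by (rule finite_subset) simp
qed

lemma isotropic_Aspace_iff:
  assumes "\<And>i. i < n \<Longrightarrow> Bs i \<in> carrier_mat n m"
  shows "isotropic (n+m) (Aspace n m Bs) U \<longleftrightarrow>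
    subspace class_ring U (module_vec TYPE('a::field) (n+m)) \<and>
    (\<forall>u\<in>U. \<forall>u'\<in>U. \<forall>g\<in>gens n m Bs. u \<bullet> (g *\<^sub>v u') = 0)"
  unfolding Aspace_def using isotropic_mat_span_iff[OF finite_gens gens_carrier[OF assms]] .

lemma alt_unit_in_gens_left: "i < j \<Longrightarrow> j < n \<Longrightarrow> alt_unit (n+m) i j \<in> gens n m Bs"
  unfolding gens_def by blast

lemma alt_unit_in_gens_right:
  assumes "n \<le> i" "i < j" "j < n + m"
  shows "alt_unit (n+m) i j \<in> gens n m Bs"
proof -
  have "alt_unit (n+m) i j = alt_unit (n+m) (n + (i - n)) (n + (j - n))" "i - n < j - n" "j - n < m"
    using assms by auto
  then show ?thesis unfolding gens_def by blast
qed

lemma transpose_deg_matrix_mult_vec: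
  assumes "\<And>i. i < n \<Longrightarrow> Bs i \<in> carrier_mat n m" "v \<in> carrier_vec m" "w \<in> carrier_vec n"
  shows "transpose_mat (deg_matrix n Bs v) *\<^sub>v w = vec n (\<lambda>i. w \<bullet> (Bs i *\<^sub>v v))"
proof (rule eq_vecI)
  fix i assume "i < dim_vec (vec n (\<lambda>i. w \<bullet> (Bs i *\<^sub>v v)))"
  then have i: "i < n" by simp
  then have Bv: "Bs i *\<^sub>v v \<in> carrier_vec n" using assms(1)[OF i] assms(2) by auto
  have "col (deg_matrix n Bs v) i = Bs i *\<^sub>v v"
    unfolding deg_matrix_def using i Bv by (subst col_mat_of_cols) auto
  then show "(transpose_mat (deg_matrix n Bs v) *\<^sub>v w) $ i = vec n (\<lambda>i. w \<bullet> (Bs i *\<^sub>v v)) $ i"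
    using i Bv assms comm_scalar_prod[of "Bs i *\<^sub>v v" n w] by (simp add: deg_matrix_def)
qed (simp add: deg_matrix_def)

lemma right_degree_less_iff:
  assumes B: "\<And>i. i < n \<Longrightarrow> Bs i \<in> carrier_mat n m" and v: "v \<in> carrier_vec m"
  shows "right_degree n Bs v < n \<longleftrightarrow>
    (\<exists>w\<in>carrier_vec n. w \<noteq> 0\<^sub>v n \<and> (\<forall>i<n. w \<bullet> (Bs i *\<^sub>v v) = 0))"
proof -
  let ?M = "deg_matrix n Bs v"
  have M: "?M \<in> carrier_mat n n" by (simp add: deg_matrix_def mat_of_cols_def)
  have "right_degree n Bs v < n \<longleftrightarrow> det ?M = 0"
    unfolding right_degree_def using vec_space.rank_le_nc[OF M] vec_space.det_rank_iff[OF M] by auto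
  also have "\<dots> \<longleftrightarrow> det (transpose_mat ?M) = 0" using det_transpose[OF M] by simp
  also have "\<dots> \<longleftrightarrow> (\<exists>w\<in>carrier_vec n. w \<noteq> 0\<^sub>v n \<and> transpose_mat ?M *\<^sub>v w = 0\<^sub>v n)"
    using det_0_iff_vec_prod_zero_field[of "transpose_mat ?M" n] M by auto
  also have "\<dots> \<longleftrightarrow> (\<exists>w\<in>carrier_vec n. w \<noteq> 0\<^sub>v n \<and> (\<forall>i<n. w \<bullet> (Bs i *\<^sub>v v) = 0))"
  proof -
    have "transpose_mat ?M *\<^sub>v w = 0\<^sub>v n \<longleftrightarrow> (\<forall>i<n. w \<bullet> (Bs i *\<^sub>v v) = 0)"
      if "w \<in> carrier_vec n" for w
    proof -
      have "transpose_mat ?M *\<^sub>v w = vec n (\<lambda>i. w \<bullet> (Bs i *\<^sub>v v))"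
        by (rule transpose_deg_matrix_mult_vec) (use B v that in auto)
      then show ?thesis by (auto simp: vec_eq_iff)
    qed
    then show ?thesis by blast
  qed
  finally show ?thesis .
qed

context vec_space
begin

lemma lincomb_pair:
  assumes "a \<in> carrier_vec n" "b \<in> carrier_vec n" "a \<noteq> b"
  shows "lincomb f {a, b} = f a \<cdot>\<^sub>v a + f b \<cdot>\<^sub>v b"
proof (rule eq_vecI)
  show "dim_vec (lincomb f {a, b}) = dim_vec (f a \<cdot>\<^sub>v a + f b \<cdot>\<^sub>v b)"
    using assms lincomb_dim[of "{a, b}" f] by simp
next
  fix i assume "i < dim_vec (f a \<cdot>\<^sub>v a + f b \<cdot>\<^sub>v b)"
  then show "lincomb f {a, b} $ i = (f a \<cdot>\<^sub>v a + f b \<cdot>\<^sub>v b) $ i"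
    using assms lincomb_index[of i "{a, b}" f] by simp
qed

lemma lin_indpt_pair_iff:
  assumes a: "a \<in> carrier_vec n" and b: "b \<in> carrier_vec n" and ab: "a \<noteq> b"
  shows "lin_indpt {a, b} \<longleftrightarrow> (\<forall>\<alpha> \<beta>. \<alpha> \<cdot>\<^sub>v a + \<beta> \<cdot>\<^sub>v b = 0\<^sub>v n \<longrightarrow> \<alpha> = 0 \<and> \<beta> = 0)"
proof
  assume indpt: "lin_indpt {a, b}"
  show "\<forall>\<alpha> \<beta>. \<alpha> \<cdot>\<^sub>v a + \<beta> \<cdot>\<^sub>v b = 0\<^sub>v n \<longrightarrow> \<alpha> = 0 \<and> \<beta> = 0"
  proof (intro allI impI)
    fix \<alpha> \<beta> assume zero: "\<alpha> \<cdot>\<^sub>v a + \<beta> \<cdot>\<^sub>v b = 0\<^sub>v n"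
    define f where "f x = (if x = a then \<alpha> else \<beta>)" for x
    have "lincomb f {a, b} = 0\<^sub>v n"
      using lincomb_pair[OF a b ab] zero ab by (simp add: f_def)
    then have "f x = 0" if "x \<in> {a, b}" for x
      using indpt that lin_dep_crit[where A="{a, b}" and S="{a, b}" and a=f and v=x] by auto
    from this[of a] this[of b] show "\<alpha> = 0 \<and> \<beta> = 0" using ab by (simp add: f_def)
  qed
next
  assume indep: "\<forall>\<alpha> \<beta>. \<alpha> \<cdot>\<^sub>v a + \<beta> \<cdot>\<^sub>v b = 0\<^sub>v n \<longrightarrow> \<alpha> = 0 \<and> \<beta> = 0"
  show "lin_indpt {a, b}"
  proof
    assume "lin_dep {a, b}"
    then obtain f x where "lincomb f {a, b} = 0\<^sub>v n" "x \<in> {a, b}" "f x \<noteq> 0"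
      using finite_lin_dep[of "{a, b}"] a b by auto
    then show False using indep lincomb_pair[OF a b ab] by auto
  qed
qed

lemma in_span_pairE:
  assumes "a \<in> carrier_vec n" "b \<in> carrier_vec n" "a \<noteq> b" "u \<in> span {a, b}"
  obtains \<alpha> \<beta> where "u = \<alpha> \<cdot>\<^sub>v a + \<beta> \<cdot>\<^sub>v b"
  using assms finite_in_span[of "{a, b}" u] lincomb_pair by auto

lemma dim_span_pair:
  assumes "a \<in> carrier_vec n" "b \<in> carrier_vec n" "a \<noteq> b" "lin_indpt {a, b}"
  shows "vectorspace.dim class_ring (span_vs {a, b}) = 2"
proof -
  have "maximal {a, b} (\<lambda>T. T \<subseteq> {a, b} \<and> lin_indpt T)"
    using assms(4) unfolding maximal_def by auto
  then show ?thesis using assms dim_span[of "{a, b}" "{a, b}"] by simp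
qed

lemma subspace_dim_2_independent_pair:
  assumes sub: "subspace class_ring U V" and dim: "vectorspace.dim class_ring (vs U) = 2"
  obtains a b where "a \<in> U" "b \<in> U" "\<And>\<alpha> \<beta>. \<alpha> \<cdot>\<^sub>v a + \<beta> \<cdot>\<^sub>v b = 0\<^sub>v n \<Longrightarrow> \<alpha> = 0 \<and> \<beta> = 0"
proof -
  have submod: "submodule class_ring U V" using sub by (simp add: subspace_def)
  then have U: "U \<subseteq> carrier_vec n" by (simp add: submodule_def)
  have vsU: "vectorspace class_ring (vs U)" by (rule subspace_is_vs[OF sub])
  have li_vs: "module.lin_dep class_ring (vs U) S = lin_dep S" if "S \<subseteq> U" for S
    using span_li_not_depend(2)[OF that submod] by simp
  let ?P = "\<lambda>S. S \<subseteq> carrier (vs U) \<and> \<not> module.lin_dep class_ring (vs U) S"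
  have bounded: "finite S \<and> card S \<le> n" if "?P S" for S
    using that li_le_dim[OF fin_dim, of S] li_vs[of S] U dim_is_n by auto
  have "?P {}" using li_vs[of "{}"] unfolding lin_dep_def by auto
  then obtain A where A: "finite A" "maximal A ?P"
    using maximal_exists[of ?P n "{}", OF bounded] by blast
  then have basis: "vectorspace.basis class_ring (vs U) A"
    using vectorspace.max_li_is_basis[OF vsU] by blast
  then have "card A = 2"
    using vectorspace.dim_basis[OF vsU A(1)] dim by simp
  then obtain a b where ab: "A = {a, b}" "a \<noteq> b" by (auto simp: card_2_iff)
  have "A \<subseteq> U" "module.lin_indpt class_ring (vs U) A"
    using basis unfolding vectorspace.basis_def[OF vsU] by auto
  then have "a \<in> U" "b \<in> U" "lin_indpt {a, b}" using ab li_vs by auto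
  with that show ?thesis using lin_indpt_pair_iff[of a b] ab(2) U by blast
qed

end

lemma exists_vanishing_combination:
  fixes a b :: "'a::field vec"
  assumes sub: "submodule class_ring U (module_vec TYPE('a) N)" and ab: "a \<in> U" "b \<in> U"
    and indep: "\<And>\<alpha> \<beta>. \<alpha> \<cdot>\<^sub>v a + \<beta> \<cdot>\<^sub>v b = 0\<^sub>v N \<Longrightarrow> \<alpha> = 0 \<and> \<beta> = 0"
    and minors: "\<And>i j. i \<in> I \<Longrightarrow> j \<in> I \<Longrightarrow> i < j \<Longrightarrow> a$i * b$j = a$j * b$i"
    and I: "I \<subseteq> {..<N}"
  obtains c where "c \<in> U" "c \<noteq> 0\<^sub>v N" "\<And>i. i \<in> I \<Longrightarrow> c$i = 0"
proof -
  have carr: "a \<in> carrier_vec N" "b \<in> carrier_vec N"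
    using ab submodule_subset_carrier_vec[OF sub] by auto
  show ?thesis
  proof (cases "\<forall>i\<in>I. a$i = 0")
    case True
    have "a \<noteq> 0\<^sub>v N"
    proof
      assume "a = 0\<^sub>v N"
      then have "1 \<cdot>\<^sub>v a + 0 \<cdot>\<^sub>v b = 0\<^sub>v N" using carr by (intro eq_vecI) auto
      then show False using indep by fastforce
    qed
    then show ?thesis using that True ab by blast
  next
    case False
    then obtain k where k: "k \<in> I" "a$k \<noteq> 0" by blast
    \<comment> \<open>c kills coordinate k, and the vanishing minors make it vanish on all of I\<close>
    define c where "c = b$k \<cdot>\<^sub>v a + (- a$k) \<cdot>\<^sub>v b"
    have "c \<in> U"
      unfolding c_def using ab submodule.smult_closed[OF sub] submodule.m_closed[OF sub]
      by (simp add: module_vec_simps)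
    moreover have "c \<noteq> 0\<^sub>v N" using indep[of "b$k" "- a$k"] k by (auto simp: c_def)
    moreover have "c$i = 0" if i: "i \<in> I" for i
    proof -
      have "a$i * b$k = a$k * b$i"
        using minors[OF i k(1)] minors[OF k(1) i] by (cases i k rule: linorder_cases) auto
      moreover have "i < N" using i I by auto
      ultimately show ?thesis using carr by (simp add: c_def mult.commute)
    qed
    ultimately show ?thesis using that by blast
  qed
qed

lemma smult_vec_eq_zero_iff:
  fixes v :: "'a::field vec"
  assumes "v \<in> carrier_vec n"
  shows "c \<cdot>\<^sub>v v = 0\<^sub>v n \<longleftrightarrow> c = 0 \<or> v = 0\<^sub>v n"
  using assms by (auto simp: vec_eq_iff)

lemma smult_append_zero_add:
  fixes w v :: "'a::semiring_1 vec"
  assumes "w \<in> carrier_vec n" "v \<in> carrier_vec m"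
  shows "\<alpha> \<cdot>\<^sub>v (w @\<^sub>v 0\<^sub>v m) + \<beta> \<cdot>\<^sub>v (0\<^sub>v n @\<^sub>v v) = (\<alpha> \<cdot>\<^sub>v w) @\<^sub>v (\<beta> \<cdot>\<^sub>v v)"
  using assms by (intro eq_vecI) auto

lemma gens_vanish_on_append:
  assumes B: "\<And>i. i < n \<Longrightarrow> Bs i \<in> carrier_mat n m"
    and w: "w \<in> carrier_vec n" and v: "v \<in> carrier_vec m"
    and wBv: "\<And>i. i < n \<Longrightarrow> w \<bullet> (Bs i *\<^sub>v v) = 0" and g: "g \<in> gens n m Bs"
  shows "((a \<cdot>\<^sub>v w) @\<^sub>v (b \<cdot>\<^sub>v v)) \<bullet> (g *\<^sub>v ((a' \<cdot>\<^sub>v w) @\<^sub>v (b' \<cdot>\<^sub>v v))) = 0"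
proof -
  let ?u = "(a \<cdot>\<^sub>v w) @\<^sub>v (b \<cdot>\<^sub>v v)" and ?u' = "(a' \<cdot>\<^sub>v w) @\<^sub>v (b' \<cdot>\<^sub>v v)"
  have u: "?u \<in> carrier_vec (n+m)" "?u' \<in> carrier_vec (n+m)" using w v by auto
  from g consider (A) i where "i < n" "g = block_alt n m (Bs i)"
    | (C) i j where "i < j" "j < n" "g = alt_unit (n+m) i j"
    | (D) k l where "k < l" "l < m" "g = alt_unit (n+m) (n+k) (n+l)"
    unfolding gens_def by blast
  then show ?thesis
  proof cases
    case A
    have Bi: "Bs i \<in> carrier_mat n m" using B A by auto
    have "?u \<bullet> (g *\<^sub>v ?u') = (a \<cdot>\<^sub>v w) \<bullet> (Bs i *\<^sub>v (b' \<cdot>\<^sub>v v)) - (a' \<cdot>\<^sub>v w) \<bullet> (Bs i *\<^sub>v (b \<cdot>\<^sub>v v))"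
      unfolding A by (rule block_alt_bilinear[OF Bi]) (use w v in auto)
    also have "\<dots> = (a * b' - a' * b) * (w \<bullet> (Bs i *\<^sub>v v))"
      using Bi w v by (simp add: mult_mat_vec[OF Bi v] algebra_simps)
    finally show ?thesis using wBv A by simp
  next
    case C
    then show ?thesis using u w v by (simp add: alt_unit_bilinear)
  next
    case D
    then show ?thesis using u w v by (simp add: alt_unit_bilinear)
  qed
qed

lemma isotropic_plane_if_right_degree_less:
  fixes Bs :: "nat \<Rightarrow> 'a::field mat"
  assumes B: "\<And>i. i < n \<Longrightarrow> Bs i \<in> carrier_mat n m"
    and v: "v \<in> carrier_vec m" "v \<noteq> 0\<^sub>v m" and deg: "right_degree n Bs v < n"
  shows "\<exists>U. isotropic (n+m) (Aspace n m Bs) U \<and> subspace_dim (n+m) U = 2"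
proof -
  interpret V: vec_space "TYPE('a)" "n+m" .
  obtain w where w: "w \<in> carrier_vec n" "w \<noteq> 0\<^sub>v n" and wBv: "\<And>i. i < n \<Longrightarrow> w \<bullet> (Bs i *\<^sub>v v) = 0"
    using deg right_degree_less_iff[of n Bs m v] B v(1) by blast
  define x where "x = w @\<^sub>v 0\<^sub>v m"
  define y where "y = 0\<^sub>v n @\<^sub>v v"
  have xy: "x \<in> carrier_vec (n+m)" "y \<in> carrier_vec (n+m)" using w v by (auto simp: x_def y_def)
  have comb: "\<alpha> \<cdot>\<^sub>v x + \<beta> \<cdot>\<^sub>v y = (\<alpha> \<cdot>\<^sub>v w) @\<^sub>v (\<beta> \<cdot>\<^sub>v v)" for \<alpha> \<beta>
    unfolding x_def y_def using smult_append_zero_add w v by blast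
  have indep: "\<alpha> = 0 \<and> \<beta> = 0" if "\<alpha> \<cdot>\<^sub>v x + \<beta> \<cdot>\<^sub>v y = 0\<^sub>v (n+m)" for \<alpha> \<beta>
  proof -
    have "0\<^sub>v n @\<^sub>v 0\<^sub>v m = (0\<^sub>v (n+m) :: 'a vec)" by auto
    then have "(\<alpha> \<cdot>\<^sub>v w) @\<^sub>v (\<beta> \<cdot>\<^sub>v v) = 0\<^sub>v n @\<^sub>v 0\<^sub>v m"
      using that comb by simp
    then show ?thesis using w v by (simp add: smult_vec_eq_zero_iff)
  qed
  have "x \<noteq> y" using w v by (simp add: x_def y_def)
  define U where "U = V.span {x, y}"
  have "subspace class_ring U (module_vec TYPE('a) (n+m))"
    unfolding U_def using xy by (intro V.span_is_subspace) auto
  moreover have "u \<bullet> (g *\<^sub>v u') = 0" if uu': "u \<in> U" "u' \<in> U" and g: "g \<in> gens n m Bs" for u u' g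
  proof -
    obtain \<alpha> \<beta> \<alpha>' \<beta>' where "u = \<alpha> \<cdot>\<^sub>v x + \<beta> \<cdot>\<^sub>v y" "u' = \<alpha>' \<cdot>\<^sub>v x + \<beta>' \<cdot>\<^sub>v y"
      using V.in_span_pairE[OF xy \<open>x \<noteq> y\<close>] uu' unfolding U_def by metis
    then show ?thesis
      unfolding comb using gens_vanish_on_append[OF B w(1) v(1) wBv g] by blast
  qed
  ultimately have "isotropic (n+m) (Aspace n m Bs) U"
    using isotropic_Aspace_iff[of n Bs m U] B by blast
  moreover have "subspace_dim (n+m) U = 2"
    unfolding subspace_dim_def U_def
    using V.dim_span_pair[OF xy \<open>x \<noteq> y\<close>] V.lin_indpt_pair_iff[OF xy \<open>x \<noteq> y\<close>] indep by blast
  ultimately show ?thesis by blast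
qed

lemma isotropic_plane_meets_blocks:
  fixes Bs :: "nat \<Rightarrow> 'a::field mat"
  assumes B: "\<And>i. i < n \<Longrightarrow> Bs i \<in> carrier_mat n m"
    and iso: "isotropic (n+m) (Aspace n m Bs) U" and dim: "subspace_dim (n+m) U = 2"
  obtains v w where "v \<in> carrier_vec m" "v \<noteq> 0\<^sub>v m" "0\<^sub>v n @\<^sub>v v \<in> U"
    and "w \<in> carrier_vec n" "w \<noteq> 0\<^sub>v n" "w @\<^sub>v 0\<^sub>v m \<in> U"
proof -
  interpret V: vec_space "TYPE('a)" "n+m" .
  have sub: "subspace class_ring U V.V"
    and vanish: "\<And>u u' g. u \<in> U \<Longrightarrow> u' \<in> U \<Longrightarrow> g \<in> gens n m Bs \<Longrightarrow> u \<bullet> (g *\<^sub>v u') = 0"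
    using iso isotropic_Aspace_iff[of n Bs m U] B by blast+
  have submod: "submodule class_ring U V.V" using sub by (simp add: subspace_def)
  have U: "U \<subseteq> carrier_vec (n+m)" using submodule_subset_carrier_vec[OF submod] .
  obtain a b where ab: "a \<in> U" "b \<in> U"
    and indep: "\<And>\<alpha> \<beta>. \<alpha> \<cdot>\<^sub>v a + \<beta> \<cdot>\<^sub>v b = 0\<^sub>v (n+m) \<Longrightarrow> \<alpha> = 0 \<and> \<beta> = 0"
    using V.subspace_dim_2_independent_pair[OF sub] dim unfolding subspace_dim_def by blast
  have minor: "a$i * b$j = a$j * b$i" if "i < j" "j < n+m" "alt_unit (n+m) i j \<in> gens n m Bs" for i j
    using vanish[OF ab that(3)] alt_unit_bilinear[of i "n+m" j a b] ab U that(1,2) by auto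
  have "\<exists>c\<in>U. c \<noteq> 0\<^sub>v (n+m) \<and> (\<forall>i<n. c$i = 0)"
    by (rule exists_vanishing_combination[OF submod ab indep, of "{..<n}"])
      (use minor[OF _ _ alt_unit_in_gens_left] in auto)
  then obtain c where c: "c \<in> U" "c \<noteq> 0\<^sub>v (n+m)" "\<forall>i<n. c$i = 0" by blast
  have "\<exists>d\<in>U. d \<noteq> 0\<^sub>v (n+m) \<and> (\<forall>i\<in>{n..<n+m}. d$i = 0)"
    by (rule exists_vanishing_combination[OF submod ab indep, of "{n..<n+m}"])
      (use minor[OF _ _ alt_unit_in_gens_right] in auto)
  then obtain d where d: "d \<in> U" "d \<noteq> 0\<^sub>v (n+m)" "\<forall>i\<in>{n..<n+m}. d$i = 0" by blast
  have cd: "c \<in> carrier_vec (n+m)" "d \<in> carrier_vec (n+m)" using c(1) d(1) U by auto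
  have c_split: "0\<^sub>v n @\<^sub>v vec_last c m = c"
    using c(3) cd(1) by (intro eq_vecI) (auto simp: vec_last_def)
  have d_split: "vec_first d n @\<^sub>v 0\<^sub>v m = d"
    using d(3) cd(2) by (intro eq_vecI) (auto simp: vec_first_def)
  have "0\<^sub>v n @\<^sub>v 0\<^sub>v m = (0\<^sub>v (n+m) :: 'a vec)" by auto
  then have "vec_last c m \<noteq> 0\<^sub>v m" "vec_first d n \<noteq> 0\<^sub>v n"
    using c(2) d(2) c_split d_split by auto
  then show ?thesis using that[of "vec_last c m" "vec_first d n"] c(1) d(1) c_split d_split by simp
qed

lemma right_degree_less_if_isotropic_plane:
  fixes Bs :: "nat \<Rightarrow> 'a::field mat"
  assumes B: "\<And>i. i < n \<Longrightarrow> Bs i \<in> carrier_mat n m"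
    and iso: "isotropic (n+m) (Aspace n m Bs) U" and dim: "subspace_dim (n+m) U = 2"
  shows "\<exists>v\<in>carrier_vec m. v \<noteq> 0\<^sub>v m \<and> right_degree n Bs v < n"
proof -
  obtain v w where v: "v \<in> carrier_vec m" "v \<noteq> 0\<^sub>v m" "0\<^sub>v n @\<^sub>v v \<in> U"
    and w: "w \<in> carrier_vec n" "w \<noteq> 0\<^sub>v n" "w @\<^sub>v 0\<^sub>v m \<in> U"
    using isotropic_plane_meets_blocks[OF B iso dim] by blast
  have "w \<bullet> (Bs i *\<^sub>v v) = 0" if i: "i < n" for i
  proof -
    have "block_alt n m (Bs i) \<in> gens n m Bs" using i unfolding gens_def by blast
    then have "(w @\<^sub>v 0\<^sub>v m) \<bullet> (block_alt n m (Bs i) *\<^sub>v (0\<^sub>v n @\<^sub>v v)) = 0"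
      using iso isotropic_Aspace_iff[of n Bs m U] B v(3) w(3) by blast
    then show ?thesis using block_alt_bilinear[OF B[OF i]] B[OF i] v(1) w(1) by simp
  qed
  then show ?thesis using right_degree_less_iff[of n Bs m v] B v(1,2) w(1,2) by blast
qed

theorem claim7p4:
  fixes n m :: nat and Bs :: "nat \<Rightarrow> 'a::field mat"
  assumes "n \<ge> 1" and "m \<ge> 1"
    and "\<And>i. i < n \<Longrightarrow> Bs i \<in> carrier_mat n m"
  shows "(\<exists>v \<in> carrier_vec m. v \<noteq> 0\<^sub>v m \<and> right_degree n Bs v < n)
     \<longleftrightarrow> (\<exists>U. isotropic (n+m) (Aspace n m Bs) U \<and> subspace_dim (n+m) U = 2)"
  using isotropic_plane_if_right_degree_less[of n Bs m] right_degree_less_if_isotropic_plane[of n Bs m]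
    assms(3) by blast

end
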